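(* Let $k$ be a positive integer and let $\mathcal A$ be an incremental clustering algorithm which, given $k$ and the points of a finite distance space $(\mathcal X,d)$ in some order, maintains (and finally outputs) a list of $\ell$ centers chosen from the points seen so far. Suppose that for every finite distance space $(\mathcal X,d)$, every ordering of $\mathcal X$, and every nice $k$-clustering $\mathcal C$ of $\mathcal X$, the final list of centers induces a refinement of $\mathcal C$. Then $\ell\ge 2^{k-1}$.
   Context: A distance space $(\mathcal X,d)$ is a set with a symmetric function $d:\mathcal X\times\mathcal X\to\mathbb R_{\ge0}$ with $d(x,x)=0$. A clustering of $\mathcal X$ is a set of nonempty, pairwise disjoint subsets whose union is $\mathcal X$; a $k$-clustering has exactly $k$ clusters. Write $x\sim_{\mathcal C}y$ if $x,y$ are in the same cluster and $x\not\sim_{\mathcal C}y$ otherwise. $\mathcal C$ is nice if for all $x,y,z\in\mathcal X$: $d(y,x)<d(z,x)$ whenever $x\sim_{\mathcal C}y$ and $x\not\sim_{\mathcal C}z$. A list $T=(t_1,\ldots,t_m)$ induces the clustering of $\mathcal X$ in which each $x$ is assigned to the index $i$ minimizing $d(x,t_i)$ (ties broken by smallest $i$), empty clusters discarded. A clustering $\mathcal C$ is a refinement of $\mathcal C'$ if $x\sim_{\mathcal C}y$ implies $x\sim_{\mathcal C'}y$ for all $x,y$. *)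

theory Defs
  imports Complex_Main
begin

definition distance_space :: "'a set \<Rightarrow> ('a \<Rightarrow> 'a \<Rightarrow> real) \<Rightarrow> bool" where
  "distance_space X d \<longleftrightarrow>
     (\<forall>x\<in>X. \<forall>y\<in>X. d x y = d y x \<and> d x y \<ge> 0) \<and> (\<forall>x\<in>X. d x x = 0)"

definition is_clustering :: "'a set \<Rightarrow> 'a set set \<Rightarrow> bool" where
  "is_clustering X C \<longleftrightarrow>
     (\<forall>c\<in>C. c \<noteq> {}) \<and> (\<forall>c\<in>C. \<forall>c'\<in>C. c \<noteq> c' \<longrightarrow> c \<inter> c' = {}) \<and> \<Union>C = X"

definition same_cluster :: "'a set set \<Rightarrow> 'a \<Rightarrow> 'a \<Rightarrow> bool" where
  "same_cluster C x y \<longleftrightarrow> (\<exists>c\<in>C. x \<in> c \<and> y \<in> c)"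

definition nice :: "'a set \<Rightarrow> ('a \<Rightarrow> 'a \<Rightarrow> real) \<Rightarrow> 'a set set \<Rightarrow> bool" where
  "nice X d C \<longleftrightarrow> (\<forall>x\<in>X. \<forall>y\<in>X. \<forall>z\<in>X.
      same_cluster C x y \<and> \<not> same_cluster C x z \<longrightarrow> d y x < d z x)"

definition nearest :: "('a \<Rightarrow> 'a \<Rightarrow> real) \<Rightarrow> 'a list \<Rightarrow> 'a \<Rightarrow> nat" where
  "nearest d T x = (LEAST i. i < length T \<and> (\<forall>j<length T. d x (T ! i) \<le> d x (T ! j)))"

definition induced :: "'a set \<Rightarrow> ('a \<Rightarrow> 'a \<Rightarrow> real) \<Rightarrow> 'a list \<Rightarrow> 'a set set" where
  "induced X d T = {c. \<exists>i<length T. c = {x\<in>X. nearest d T x = i} \<and> c \<noteq> {}}"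

definition refines :: "'a set set \<Rightarrow> 'a set set \<Rightarrow> bool" where
  "refines C C' \<longleftrightarrow> (\<forall>x y. same_cluster C x y \<longrightarrow> same_cluster C' x y)"

text \<open>An update rule upd receives k, the distance matrix of the list L = (current centers) @ [new point]
  (entries outside the range are 0) and the length m of L, and returns a list of indices into L
  selecting the new centers. It may only use distances, never point identities.\<close>
definition valid_update :: "nat \<Rightarrow> (nat \<Rightarrow> (nat \<Rightarrow> nat \<Rightarrow> real) \<Rightarrow> nat \<Rightarrow> nat list) \<Rightarrow> bool" where
  "valid_update l upd \<longleftrightarrow> (\<forall>k M m. set (upd k M m) \<subseteq> {..<m} \<and> length (upd k M m) \<le> l
       \<and> (m > 0 \<longrightarrow> upd k M m \<noteq> []))"

definition step :: "(nat \<Rightarrow> (nat \<Rightarrow> nat \<Rightarrow> real) \<Rightarrow> nat \<Rightarrow> nat list) \<Rightarrow> nat \<Rightarrow> ('a \<Rightarrow> 'a \<Rightarrow> real)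
     \<Rightarrow> 'a \<Rightarrow> 'a list \<Rightarrow> 'a list" where
  "step upd k d x T = (let L = T @ [x]; m = length L in
     map (\<lambda>i. L ! i) (upd k (\<lambda>i j. if i < m \<and> j < m then d (L ! i) (L ! j) else 0) m))"

definition run :: "(nat \<Rightarrow> (nat \<Rightarrow> nat \<Rightarrow> real) \<Rightarrow> nat \<Rightarrow> nat list) \<Rightarrow> nat \<Rightarrow> ('a \<Rightarrow> 'a \<Rightarrow> real)
     \<Rightarrow> 'a list \<Rightarrow> 'a list" where
  "run upd k d xs = fold (step upd k d) xs []"

end

theory Submission
  imports Defs "HOL-Library.Countable"
begin

(* We exhibit a finite
   distance space with 2^(k-1) points in which every point p forms a singleton cluster of some
   nice k-clustering.  A singleton cluster {p} can only be refined if p is itself a center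
   (otherwise p shares its cell with its nearest center), so every point is a center and the
   memory bound l is at least 2^(k-1).

   The space is the set of leaves of a complete binary tree of depth n = k - 1: bit strings of
   length n, at distance n - (length of the common prefix), encoded into nat.  Grouping the
   leaves by the length of their common prefix with a fixed leaf p gives the nice clustering
   with the n + 1 clusters, of which {p} is one; niceness is an ultrametric argument. *)

section \<open>Length of the common prefix of two lists\<close>

fun cpl :: "'a list \<Rightarrow> 'a list \<Rightarrow> nat" where
  "cpl (x # xs) (y # ys) = (if x = y then Suc (cpl xs ys) else 0)"
| "cpl _ _ = 0"

lemma cpl_sym: "cpl a b = cpl b a"
  by (induction a b rule: cpl.induct) auto

lemma cpl_le: "cpl a b \<le> length a"
  by (induction a b rule: cpl.induct) auto

lemma cpl_self: "cpl a a = length a"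
  by (induction a) auto

lemma cpl_full_eq: "length a = length b \<Longrightarrow> cpl a b = length a \<Longrightarrow> a = b"
  by (induction a b rule: cpl.induct) (auto split: if_splits)

lemma cpl_ultra: "min (cpl a b) (cpl b c) \<le> cpl a c"
proof (induction a arbitrary: b c)
  case Nil
  then show ?case by (cases b) auto
next
  case (Cons x a)
  note IH = Cons.IH
  show ?case
  proof (cases b)
    case (Cons y b')
    then show ?thesis using IH[of b' "tl c"] by (cases c) auto
  qed simp
qed

text \<open>Over booleans there is only one way to leave p at a given position: two words that leave
  p at the same position i still agree at position i, so they share more than i letters.\<close>
lemma cpl_bool_branch:
  fixes a b p :: "bool list"
  assumes "length a = length p" "length b = length p" "cpl a p = cpl b p" "cpl a p < length p"
  shows "cpl a p < cpl a b"
  using assms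
proof (induction p arbitrary: a b)
  case Nil
  then show ?case by simp
next
  case (Cons q p)
  then obtain x a' y b' where "a = x # a'" "b = y # b'"
    by (cases a; cases b) auto
  with Cons.prems Cons.IH[of a' b'] show ?case by (auto split: if_splits)
qed

lemma cpl_flip: "i < length p \<Longrightarrow> cpl (take i p @ (\<not> p ! i) # drop (Suc i) p) p = i"
proof (induction p arbitrary: i)
  case Nil
  then show ?case by simp
next
  case (Cons q p)
  then show ?case by (cases i) auto
qed

lemma cpl_level_nice:
  fixes a b c q :: "bool list"
  assumes len: "length a = n" "length b = n" "length c = n" "length q = n"
    and same: "cpl a q = cpl b q" and other: "cpl c q \<noteq> cpl a q"
  shows "cpl c a < cpl b a"
proof -
  have "min (cpl c a) (cpl a q) \<le> cpl c q" "min (cpl a c) (cpl c q) \<le> cpl a q"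
    by (rule cpl_ultra)+
  with other have c_a: "cpl c a \<le> min (cpl a q) (cpl c q)"
    by (simp add: cpl_sym) linarith
  show ?thesis
  proof (cases "cpl a q < n")
    case True
    then have "cpl a q < cpl a b" using cpl_bool_branch[of a q b] len same by simp
    with c_a show ?thesis by (simp add: cpl_sym)
  next
    case False
    then have "cpl a q = n" using cpl_le[of a q] len by simp
    then have "a = q" "b = q" using cpl_full_eq len same by metis+
    with c_a other len show ?thesis by (simp add: cpl_self)
  qed
qed

section \<open>Nearest centers\<close>

lemma nearest_props:
  assumes "T \<noteq> []"
  shows "nearest d T x < length T" "\<forall>j<length T. d x (T ! nearest d T x) \<le> d x (T ! j)"
proof -
  let ?A = "(\<lambda>j. d x (T ! j)) ` {..<length T}"
  have fin: "finite ?A" and ne: "?A \<noteq> {}" using assms by auto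
  obtain i where i_min: "Min ?A = d x (T ! i)" and i: "i \<in> {..<length T}"
    using Min_in[OF fin ne] by (rule imageE)
  have "\<forall>j<length T. d x (T ! i) \<le> d x (T ! j)"
  proof (intro allI impI)
    fix j assume "j < length T"
    then show "d x (T ! i) \<le> d x (T ! j)" unfolding i_min[symmetric] by (intro Min_le[OF fin]) simp
  qed
  with i have "\<exists>i. i < length T \<and> (\<forall>j<length T. d x (T ! i) \<le> d x (T ! j))" by auto
  then have "nearest d T x < length T \<and> (\<forall>j<length T. d x (T ! nearest d T x) \<le> d x (T ! j))"
    unfolding nearest_def by (rule LeastI_ex)
  then show "nearest d T x < length T" "\<forall>j<length T. d x (T ! nearest d T x) \<le> d x (T ! j)"
    by auto
qed

lemma nearest_least:
  "i < length T \<Longrightarrow> \<forall>j<length T. d x (T ! i) \<le> d x (T ! j) \<Longrightarrow> nearest d T x \<le> i"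
  unfolding nearest_def by (rule Least_le) simp

lemma nearest_center_same_cell:
  assumes T: "T \<noteq> []" "set T \<subseteq> X" and X: "distance_space X d"
    and pos: "\<forall>x\<in>X. \<forall>y\<in>X. d x y = 0 \<longrightarrow> x = y"
  shows "nearest d T (T ! nearest d T x) = nearest d T x"
proof -
  define i where "i = nearest d T x"
  define c where "c = T ! i"
  define j where "j = nearest d T c"
  have i: "i < length T" "\<forall>m<length T. d x (T ! i) \<le> d x (T ! m)"
    using nearest_props[OF T(1)] unfolding i_def by auto
  have j: "j < length T" "\<forall>m<length T. d c (T ! j) \<le> d c (T ! m)"
    using nearest_props[OF T(1)] unfolding j_def by auto
  have cX: "c \<in> X" and TjX: "T ! j \<in> X" using i(1) j(1) T(2) unfolding c_def by auto
  have dist_c: "d c (T ! i) = 0" using X cX unfolding distance_space_def c_def by simp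
  have c_min: "\<forall>m<length T. d c (T ! i) \<le> d c (T ! m)"
  proof (intro allI impI)
    fix m assume "m < length T"
    then have "T ! m \<in> X" using T(2) by auto
    then show "d c (T ! i) \<le> d c (T ! m)" using X cX dist_c unfolding distance_space_def by simp
  qed
  have "d c (T ! j) \<le> 0" using j(2) i(1) dist_c by auto
  moreover have "0 \<le> d c (T ! j)" using X cX TjX unfolding distance_space_def by simp
  ultimately have "d c (T ! j) = 0" by simp
  then have "T ! j = T ! i" using pos[rule_format, OF cX TjX] unfolding c_def by simp
  then have "nearest d T x \<le> j" using nearest_least[OF j(1), where x = x] i(2) by simp
  moreover have "nearest d T c \<le> i" using nearest_least[OF i(1), where x = c] c_min by simp
  ultimately show ?thesis unfolding i_def j_def c_def by simp
qed

lemma isolated_point_is_center: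
  assumes T: "T \<noteq> []" "set T \<subseteq> X" and X: "distance_space X d"
    and pos: "\<forall>x\<in>X. \<forall>y\<in>X. d x y = 0 \<longrightarrow> x = y"
    and p: "p \<in> X" and ref: "refines (induced X d T) C"
    and iso: "\<forall>y\<in>X. same_cluster C p y \<longrightarrow> y = p"
  shows "p \<in> set T"
proof -
  define i where "i = nearest d T p"
  define c where "c = T ! i"
  have i: "i < length T" using nearest_props[OF T(1)] unfolding i_def by simp
  have cX: "c \<in> X" using i T(2) unfolding c_def by auto
  let ?cell = "{x\<in>X. nearest d T x = i}"
  have "p \<in> ?cell" "c \<in> ?cell"
    using p cX nearest_center_same_cell[OF T X pos] unfolding i_def c_def by auto
  moreover have "?cell \<in> induced X d T"
    unfolding induced_def mem_Collect_eq using i \<open>p \<in> ?cell\<close> by (intro exI[of _ i]) auto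
  ultimately have "same_cluster (induced X d T) p c"
    unfolding same_cluster_def by (intro bexI conjI)
  then have "same_cluster C p c" by (rule ref[unfolded refines_def, rule_format])
  then have "c = p" by (rule iso[rule_format, OF cX])
  then show ?thesis using i unfolding c_def by auto
qed

section \<open>Invariants of the incremental algorithm\<close>

lemma step_props:
  assumes "valid_update l upd"
  shows "set (step upd k d x T) \<subseteq> insert x (set T)" "length (step upd k d x T) \<le> l"
    "step upd k d x T \<noteq> []"
proof -
  let ?L = "T @ [x]"
  let ?M = "\<lambda>i j. if i < length ?L \<and> j < length ?L then d (?L ! i) (?L ! j) else 0"
  have upd: "set (upd k ?M (length ?L)) \<subseteq> {..<length ?L}" "length (upd k ?M (length ?L)) \<le> l"
    "upd k ?M (length ?L) \<noteq> []"
    using assms unfolding valid_update_def by auto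
  have eq: "step upd k d x T = map (\<lambda>i. ?L ! i) (upd k ?M (length ?L))"
    unfolding step_def Let_def by simp
  have "set (step upd k d x T) = (\<lambda>i. ?L ! i) ` set (upd k ?M (length ?L))"
    unfolding eq by simp
  also have "\<dots> \<subseteq> set ?L" using upd(1) by (intro image_subsetI nth_mem) auto
  finally show "set (step upd k d x T) \<subseteq> insert x (set T)" by simp
  show "length (step upd k d x T) \<le> l" "step upd k d x T \<noteq> []" using upd(2,3) eq by simp_all
qed

lemma fold_step_set:
  "valid_update l upd \<Longrightarrow> set (fold (step upd k d) xs T) \<subseteq> set T \<union> set xs"
proof (induction xs arbitrary: T)
  case Nil
  then show ?case by simp
next
  case (Cons x xs)
  then show ?case using step_props(1)[OF Cons.prems, of k d x T] by fastforce
qed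

lemma run_props:
  assumes "valid_update l upd" "xs \<noteq> []"
  shows "set (run upd k d xs) \<subseteq> set xs" "length (run upd k d xs) \<le> l" "run upd k d xs \<noteq> []"
proof -
  show "set (run upd k d xs) \<subseteq> set xs"
    unfolding run_def using fold_step_set[OF assms(1)] by fastforce
  obtain ys y where "xs = ys @ [y]" using assms(2) by (cases xs rule: rev_cases) auto
  then have "run upd k d xs = step upd k d y (fold (step upd k d) ys [])" unfolding run_def by simp
  then show "length (run upd k d xs) \<le> l" "run upd k d xs \<noteq> []"
    using step_props(2,3)[OF assms(1)] by simp_all
qed

section \<open>The leaves of the complete binary tree of depth n\<close>

abbreviation word :: "nat \<Rightarrow> bool list" where
  "word \<equiv> from_nat"

text \<open>The points of the space, and the tree distance: n minus the depth of the last common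
  ancestor of two leaves.\<close>
definition cube :: "nat \<Rightarrow> nat set" where
  "cube n = to_nat ` {w :: bool list. length w = n}"

definition cube_dist :: "nat \<Rightarrow> nat \<Rightarrow> nat \<Rightarrow> real" where
  "cube_dist n x y = real n - real (cpl (word x) (word y))"

lemma word_cube: "x \<in> cube n \<Longrightarrow> length (word x) = n"
  unfolding cube_def by auto

lemma to_nat_cube: "length (w :: bool list) = n \<Longrightarrow> to_nat w \<in> cube n"
  unfolding cube_def by (rule imageI) simp

lemma word_inj_cube: "x \<in> cube n \<Longrightarrow> y \<in> cube n \<Longrightarrow> word x = word y \<Longrightarrow> x = y"
  unfolding cube_def by (elim imageE) simp

lemma finite_cube: "finite (cube n)" and card_cube: "card (cube n) = 2 ^ n"
proof -
  have words: "{w :: bool list. length w = n} = {w. set w \<subseteq> UNIV \<and> length w = n}" by simp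
  have "finite {w :: bool list. length w = n}"
    unfolding words by (rule finite_lists_length_eq) simp
  then show "finite (cube n)" unfolding cube_def by (rule finite_imageI)
  have "card (cube n) = card {w :: bool list. length w = n}"
    unfolding cube_def by (rule card_image, rule inj_on_subset[OF inj_to_nat subset_UNIV])
  also have "\<dots> = 2 ^ n"
    unfolding words by (simp only: card_lists_length_eq finite_UNIV card_UNIV_bool)
  finally show "card (cube n) = 2 ^ n" .
qed

lemma cpl_cube_le: "x \<in> cube n \<Longrightarrow> cpl (word x) (word y) \<le> n"
  using cpl_le[of "word x" "word y"] by (simp add: word_cube)

lemma cube_distance_space: "distance_space (cube n) (cube_dist n)"
  unfolding distance_space_def cube_dist_def
  using cpl_cube_le by (auto simp: cpl_sym cpl_self word_cube)

lemma cube_dist_zero: "\<forall>x\<in>cube n. \<forall>y\<in>cube n. cube_dist n x y = 0 \<longrightarrow> x = y"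
proof (intro ballI impI)
  fix x y assume x: "x \<in> cube n" and y: "y \<in> cube n" and "cube_dist n x y = 0"
  then have "cpl (word x) (word y) = length (word x)" unfolding cube_dist_def by (simp add: word_cube)
  then have "word x = word y" by (rule cpl_full_eq[rotated]) (simp add: word_cube[OF x] word_cube[OF y])
  then show "x = y" by (rule word_inj_cube[OF x y])
qed

definition level :: "nat \<Rightarrow> nat \<Rightarrow> nat \<Rightarrow> nat set" where
  "level n p i = {x \<in> cube n. cpl (word x) (word p) = i}"

definition level_clustering :: "nat \<Rightarrow> nat \<Rightarrow> nat set set" where
  "level_clustering n p = level n p ` {0..n}"

lemma level_nonempty:
  assumes p: "p \<in> cube n" and i: "i \<le> n"
  shows "level n p i \<noteq> {}"
proof (cases "i = n")
  case True
  then have "p \<in> level n p i" unfolding level_def using p word_cube by (simp add: cpl_self)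
  then show ?thesis by blast
next
  case False
  define w where "w = take i (word p) @ (\<not> word p ! i) # drop (Suc i) (word p)"
  have "i < length (word p)" using p i False word_cube by fastforce
  then have "length w = n" "cpl w (word p) = i"
    using p word_cube cpl_flip unfolding w_def by auto
  then have "to_nat w \<in> level n p i" unfolding level_def using to_nat_cube[of w n] by simp
  then show ?thesis by blast
qed

lemma same_level_iff:
  assumes "x \<in> cube n" "y \<in> cube n"
  shows "same_cluster (level_clustering n p) x y \<longleftrightarrow> cpl (word x) (word p) = cpl (word y) (word p)"
proof
  assume "cpl (word x) (word p) = cpl (word y) (word p)"
  moreover have "cpl (word x) (word p) \<le> n" using assms(1) by (rule cpl_cube_le)
  ultimately show "same_cluster (level_clustering n p) x y"
    unfolding same_cluster_def level_clustering_def level_def using assms by fastforce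
qed (auto simp: same_cluster_def level_clustering_def level_def)

lemma level_clustering_is_clustering:
  assumes "p \<in> cube n"
  shows "is_clustering (cube n) (level_clustering n p)"
  unfolding is_clustering_def
proof (intro conjI ballI impI)
  fix c assume "c \<in> level_clustering n p"
  then show "c \<noteq> {}" using level_nonempty[OF assms] unfolding level_clustering_def by auto
next
  fix c c' assume "c \<in> level_clustering n p" "c' \<in> level_clustering n p" "c \<noteq> c'"
  then show "c \<inter> c' = {}" unfolding level_clustering_def level_def by auto
next
  have "x \<in> \<Union>(level_clustering n p)" if x: "x \<in> cube n" for x
  proof -
    have "cpl (word x) (word p) \<le> n" using x by (rule cpl_cube_le)
    moreover have "x \<in> level n p (cpl (word x) (word p))" using x unfolding level_def by simp
    ultimately show ?thesis unfolding level_clustering_def by auto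
  qed
  moreover have "\<Union>(level_clustering n p) \<subseteq> cube n"
    unfolding level_clustering_def level_def by blast
  ultimately show "\<Union>(level_clustering n p) = cube n" by blast
qed

lemma card_level_clustering:
  assumes "p \<in> cube n"
  shows "card (level_clustering n p) = Suc n"
proof -
  have "inj_on (level n p) {0..n}"
  proof (rule inj_onI)
    fix i j assume "i \<in> {0..n}" "j \<in> {0..n}" "level n p i = level n p j"
    then show "i = j" using level_nonempty[OF assms, of i] unfolding level_def by auto
  qed
  then show ?thesis unfolding level_clustering_def by (simp add: card_image)
qed

lemma level_clustering_nice:
  assumes "p \<in> cube n"
  shows "nice (cube n) (cube_dist n) (level_clustering n p)"
  unfolding nice_def
proof (intro ballI impI)
  fix x y z assume xyz: "x \<in> cube n" "y \<in> cube n" "z \<in> cube n"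
    and clusters: "same_cluster (level_clustering n p) x y \<and> \<not> same_cluster (level_clustering n p) x z"
  have same: "cpl (word x) (word p) = cpl (word y) (word p)"
    using clusters same_level_iff[OF xyz(1,2)] by simp
  have other: "cpl (word z) (word p) \<noteq> cpl (word x) (word p)"
    using clusters same_level_iff[OF xyz(1,3)] by simp
  have "length (word x) = n" "length (word y) = n" "length (word z) = n" "length (word p) = n"
    using word_cube xyz assms by simp_all
  then have "cpl (word z) (word x) < cpl (word y) (word x)"
    by (rule cpl_level_nice[OF _ _ _ _ same other])
  then show "cube_dist n y x < cube_dist n z x" unfolding cube_dist_def by simp
qed

lemma level_clustering_isolates:
  assumes p: "p \<in> cube n"
  shows "\<forall>y\<in>cube n. same_cluster (level_clustering n p) p y \<longrightarrow> y = p"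
proof (intro ballI impI)
  fix y assume y: "y \<in> cube n" and "same_cluster (level_clustering n p) p y"
  then have "cpl (word y) (word p) = length (word y)"
    using same_level_iff[OF p y] p word_cube by (simp add: cpl_self)
  then show "y = p" using cpl_full_eq word_cube word_inj_cube p y by metis
qed

theorem mainTheorem9:
  fixes upd :: "nat \<Rightarrow> (nat \<Rightarrow> nat \<Rightarrow> real) \<Rightarrow> nat \<Rightarrow> nat list" and k l :: nat
  assumes "k \<ge> 1"
    and "valid_update l upd"
    and "\<forall>(X::nat set) d xs C. finite X \<longrightarrow> distance_space X d \<longrightarrow> distinct xs \<longrightarrow> set xs = X
           \<longrightarrow> is_clustering X C \<longrightarrow> card C = k \<longrightarrow> nice X d C
           \<longrightarrow> refines (induced X d (run upd k d xs)) C"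
  shows "l \<ge> 2 ^ (k - 1)"
proof -
  define n where "n = k - 1"
  have k: "k = Suc n" using assms(1) unfolding n_def by simp
  define xs where "xs = sorted_list_of_set (cube n)"
  have xs: "distinct xs" "set xs = cube n" "xs \<noteq> []"
    using finite_cube card_cube[of n] unfolding xs_def by auto
  define T where "T = run upd k (cube_dist n) xs"
  have T: "set T \<subseteq> cube n" "length T \<le> l" "T \<noteq> []"
    using run_props[OF assms(2) xs(3)] xs(2) unfolding T_def by auto
  have "cube n \<subseteq> set T"
  proof
    fix p assume p: "p \<in> cube n"
    have "refines (induced (cube n) (cube_dist n) T) (level_clustering n p)"
      unfolding T_def using assms(3)[rule_format, OF finite_cube cube_distance_space xs(1,2)
        level_clustering_is_clustering[OF p] card_level_clustering[OF p, folded k]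
        level_clustering_nice[OF p]] .
    then show "p \<in> set T"
      using isolated_point_is_center[OF T(3,1) cube_distance_space cube_dist_zero p]
        level_clustering_isolates[OF p] by blast
  qed
  then have "card (cube n) \<le> length T"
    using card_mono[OF _ \<open>cube n \<subseteq> set T\<close>] card_length[of T] by simp
  then show ?thesis using T(2) card_cube unfolding n_def by simp
qed

end
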